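(* Every pair of orthogonal quantum Latin squares of order $4$ is classical.
   Context: A quantum Latin square (QLS) of order $n$ is an $n\times n$ matrix $\Psi=(\psi_{ij})_{1\le i,j\le n}$ whose entries are unit vectors in $\mathbb C^n$ such that the entries of each row and the entries of each column form an orthonormal basis of $\mathbb C^n$. Two QLS $\Psi=(\psi_{ij})$ and $\Phi=(\phi_{ij})$ of order $n$ are orthogonal if $\{\psi_{ij}\otimes\phi_{ij}: 1\le i,j\le n\}$ is an orthonormal basis of $\mathbb C^n\otimes\mathbb C^n$. Fix the standard orthonormal basis $\ket{1},\dots,\ket{n}$ of $\mathbb C^n$. Two pairs of orthogonal QLS of order $n$ are isotopic if one can be obtained from the other by a sequence of the operations: (i) multiplying individual entries by phase factors; (ii) permuting the rows, and permuting the columns, simultaneously in both squares; (iii) for each square separately, applying one unitary transformation of $\mathbb C^n$ to all entries of that square. A pair is classical if it is isotopic to a pair all of whose entries lie in $\{\ket{1},\dots,\ket{n}\}$. *)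

theory Defs
  imports "HOL-Analysis.Analysis"
begin

text \<open>Vectors of C^n are modelled as complex^'n, where the finite index type 'n has
  CARD('n) = n elements. Rows and columns of a square are also indexed by 'n.\<close>

definition cinner :: "complex^'n \<Rightarrow> complex^'n \<Rightarrow> complex" where
  "cinner x y = (\<Sum>i\<in>UNIV. cnj (x$i) * y$i)"

definition is_onb :: "('i \<Rightarrow> complex^'n) \<Rightarrow> 'i set \<Rightarrow> bool" where
  "is_onb f I \<longleftrightarrow>
     (\<forall>a\<in>I. \<forall>b\<in>I. cinner (f a) (f b) = (if a = b then 1 else 0)) \<and>
     (\<forall>v::complex^'n. \<exists>c. v = (\<Sum>a\<in>I. c a *s f a))"

type_synonym 'n qsquare = "'n \<Rightarrow> 'n \<Rightarrow> complex^'n"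

definition QLS :: "'n::finite qsquare \<Rightarrow> bool" where
  "QLS \<Psi> \<longleftrightarrow> (\<forall>i j. cinner (\<Psi> i j) (\<Psi> i j) = 1) \<and>
     (\<forall>i. is_onb (\<lambda>j. \<Psi> i j) UNIV) \<and> (\<forall>j. is_onb (\<lambda>i. \<Psi> i j) UNIV)"

definition tensor :: "complex^'n \<Rightarrow> complex^'m \<Rightarrow> complex^('n \<times> 'm)" where
  "tensor x y = (\<chi> p. x $ fst p * y $ snd p)"

definition orthogonal_QLS :: "'n::finite qsquare \<Rightarrow> 'n qsquare \<Rightarrow> bool" where
  "orthogonal_QLS \<Psi> \<Phi> \<longleftrightarrow>
     is_onb (\<lambda>(i,j). tensor (\<Psi> i j) (\<Phi> i j)) (UNIV :: ('n \<times> 'n) set)"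

definition cadj :: "complex^'n^'m \<Rightarrow> complex^'m^'n" where
  "cadj U = (\<chi> i j. cnj (U $ j $ i))"

definition unitary :: "complex^'n^'n \<Rightarrow> bool" where
  "unitary U \<longleftrightarrow> cadj U ** U = mat 1 \<and> U ** cadj U = mat 1"

inductive isotopy_step :: "'n::finite qsquare \<times> 'n qsquare \<Rightarrow> 'n qsquare \<times> 'n qsquare \<Rightarrow> bool" where
  phase: "(\<forall>i j. norm (c i j) = 1 \<and> norm (d i j) = 1) \<Longrightarrow>
     isotopy_step (\<Psi>, \<Phi>) (\<lambda>i j. c i j *s \<Psi> i j, \<lambda>i j. d i j *s \<Phi> i j)"
| permute: "bij \<sigma> \<Longrightarrow> bij \<tau> \<Longrightarrow>
     isotopy_step (\<Psi>, \<Phi>) (\<lambda>i j. \<Psi> (\<sigma> i) (\<tau> j), \<lambda>i j. \<Phi> (\<sigma> i) (\<tau> j))"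
| unitary_first: "unitary U \<Longrightarrow> isotopy_step (\<Psi>, \<Phi>) (\<lambda>i j. U *v \<Psi> i j, \<Phi>)"
| unitary_second: "unitary U \<Longrightarrow> isotopy_step (\<Psi>, \<Phi>) (\<Psi>, \<lambda>i j. U *v \<Phi> i j)"

definition isotopic :: "'n::finite qsquare \<times> 'n qsquare \<Rightarrow> 'n qsquare \<times> 'n qsquare \<Rightarrow> bool" where
  "isotopic = isotopy_step\<^sup>*\<^sup>*"

text \<open>Standard basis vector |k> is axis k 1.\<close>
definition classical_pair :: "'n::finite qsquare \<Rightarrow> 'n qsquare \<Rightarrow> bool" where
  "classical_pair \<Psi> \<Phi> \<longleftrightarrow> (\<exists>A B. isotopic (\<Psi>, \<Phi>) (A, B) \<and>
     (\<forall>i j. A i j \<in> range (\<lambda>k. axis k 1) \<and> B i j \<in> range (\<lambda>k. axis k 1)))"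

end

theory Submission
  imports Defs
begin

text \<open>Orthogonality of the pair says that for distinct cells the overlaps of the two
  squares there cannot both be nonzero. In order 4 this forces any two entries of one
  square to be either orthogonal or equal up to a phase: if an entry of row \<open>i\<close> overlapped
  the entries of column \<open>j\<close> in two further rows, expanding their orthogonality in row \<open>i\<close>
  yields a second such entry of row \<open>i\<close>; in the other square both column-\<open>j\<close> entries are
  then orthogonal to three entries of row \<open>i\<close> and hence parallel to the fourth, which
  contradicts their own orthogonality. Once all entries are parallel to entries of one
  fixed row, the unitary sending that row to the standard basis makes the square
  classical up to phases.\<close>

lemma sum_UNIV_eq_single:
  fixes f :: "'a::finite \<Rightarrow> 'b::comm_monoid_add"
  assumes "\<And>k. k \<noteq> m \<Longrightarrow> f k = 0"
  shows "(\<Sum>k\<in>UNIV. f k) = f m"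
  using assms by (subst sum.remove[of UNIV m]) (auto intro: sum.neutral)

lemma cinner_swap: "cinner y x = cnj (cinner x y)"
  unfolding cinner_def by (simp add: mult.commute)

lemma cinner_sum_right:
  "cinner x (\<Sum>a\<in>A. c a *s f a) = (\<Sum>a\<in>A. c a * cinner x (f a))"
  unfolding cinner_def
  by (simp add: sum_component sum_distrib_left sum_distrib_right algebra_simps sum.swap[of _ A])

lemma cinner_tensor:
  "cinner (tensor x y) (tensor x' y') = cinner x x' * cinner y y'"
  unfolding cinner_def tensor_def
  by (simp add: sum_product UNIV_Times_UNIV[symmetric] sum.cartesian_product algebra_simps
      split_beta del: UNIV_Times_UNIV)

lemma is_onb_orthonormal:
  assumes "is_onb f UNIV"
  shows "cinner (f a) (f b) = (if a = b then 1 else 0)"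
  using assms unfolding is_onb_def by auto

lemma is_onb_expansion:
  fixes f :: "'i::finite \<Rightarrow> complex^'n"
  assumes onb: "is_onb f UNIV"
  shows "v = (\<Sum>a\<in>UNIV. cinner (f a) v *s f a)"
proof -
  obtain c where c: "v = (\<Sum>a\<in>UNIV. c a *s f a)"
    using onb unfolding is_onb_def by blast
  have "cinner (f b) v = c b" for b
  proof -
    have "cinner (f b) v = (\<Sum>a\<in>UNIV. c a * cinner (f b) (f a))"
      by (subst c, rule cinner_sum_right)
    also have "\<dots> = c b"
      by (subst sum_UNIV_eq_single[where m = b]) (simp_all add: is_onb_orthonormal[OF onb])
    finally show ?thesis .
  qed
  then show ?thesis using c by simp
qed

lemma is_onb_cinner_expansion:
  fixes f :: "'i::finite \<Rightarrow> complex^'n"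
  assumes "is_onb f UNIV"
  shows "cinner u v = (\<Sum>a\<in>UNIV. cinner u (f a) * cinner (f a) v)"
proof -
  have "cinner u v = cinner u (\<Sum>a\<in>UNIV. cinner (f a) v *s f a)"
    using is_onb_expansion[OF assms, of v] by simp
  then show ?thesis
    by (simp add: cinner_sum_right mult.commute)
qed

lemma is_onb_cinner_single:
  fixes f :: "'i::finite \<Rightarrow> complex^'n"
  assumes "is_onb f UNIV" and "\<And>a. a \<noteq> m \<Longrightarrow> cinner u (f a) * cinner (f a) v = 0"
  shows "cinner u v = cinner u (f m) * cinner (f m) v"
  using is_onb_cinner_expansion[OF assms(1), of u v] sum_UNIV_eq_single[OF assms(2)] by simp

lemma is_onb_parseval:
  fixes f :: "'i::finite \<Rightarrow> complex^'n"
  assumes "is_onb f UNIV" and "cinner v v = 1"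
  shows "(\<Sum>a\<in>UNIV. (cmod (cinner (f a) v))\<^sup>2) = 1"
proof -
  have "complex_of_real (\<Sum>a\<in>UNIV. (cmod (cinner (f a) v))\<^sup>2)
      = (\<Sum>a\<in>UNIV. cinner v (f a) * cinner (f a) v)"
    by (simp add: complex_norm_square[symmetric] cinner_swap[of v] mult.commute)
  also have "\<dots> = 1"
    using is_onb_cinner_expansion[OF assms(1), of v v] assms(2) by simp
  finally show ?thesis by (metis of_real_eq_1_iff)
qed

lemma is_onb_coefficient_norm_1_iff:
  fixes f :: "'i::finite \<Rightarrow> complex^'n"
  assumes "is_onb f UNIV" and "cinner v v = 1"
  shows "cmod (cinner (f a) v) = 1 \<longleftrightarrow> (\<forall>b. b \<noteq> a \<longrightarrow> cinner (f b) v = 0)"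
proof -
  have "(cmod (cinner (f a) v))\<^sup>2 + (\<Sum>b\<in>UNIV - {a}. (cmod (cinner (f b) v))\<^sup>2) = 1"
    using is_onb_parseval[OF assms] by (simp add: sum.remove)
  moreover have "(\<Sum>b\<in>UNIV - {a}. (cmod (cinner (f b) v))\<^sup>2) = 0
      \<longleftrightarrow> (\<forall>b. b \<noteq> a \<longrightarrow> cinner (f b) v = 0)"
    by (subst sum_nonneg_eq_0_iff) auto
  moreover have "(cmod (cinner (f a) v))\<^sup>2 = 1 \<longleftrightarrow> cmod (cinner (f a) v) = 1"
    using norm_ge_zero[of "cinner (f a) v"] unfolding power2_eq_1_iff by linarith
  ultimately show ?thesis by argo
qed

definition onb_matrix :: "('n::finite \<Rightarrow> complex^'m) \<Rightarrow> complex^'m^'n" where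
  "onb_matrix f = (\<chi> k l. cnj (f k $ l))"

lemma onb_matrix_mult_vec: "(onb_matrix f *v v) $ k = cinner (f k) v"
  by (simp add: onb_matrix_def matrix_vector_mult_def cinner_def)

lemma unitary_onb_matrix:
  fixes f :: "'n::finite \<Rightarrow> complex^'n"
  assumes "is_onb f UNIV"
  shows "unitary (onb_matrix f)"
proof -
  have "(onb_matrix f ** cadj (onb_matrix f)) $ a $ b = cinner (f a) (f b)" for a b
    by (simp add: onb_matrix_def cadj_def matrix_matrix_mult_def cinner_def)
  then have "onb_matrix f ** cadj (onb_matrix f) = mat 1"
    by (simp add: vec_eq_iff mat_def is_onb_orthonormal[OF assms])
  then show ?thesis
    unfolding unitary_def using matrix_left_right_inverse by blast
qed

lemma onb_matrix_axis_phase: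
  fixes f :: "'n::finite \<Rightarrow> complex^'n"
  assumes onb: "is_onb f UNIV" and unit: "cinner v v = 1"
    and orthogonal_or_parallel: "\<And>k. cinner (f k) v = 0 \<or> cmod (cinner (f k) v) = 1"
  obtains c k where "cmod c = 1" and "c *s (onb_matrix f *v v) = axis k 1"
proof -
  have "\<exists>k. cinner (f k) v \<noteq> 0"
  proof (rule ccontr)
    assume "\<not> ?thesis"
    then have "v = 0" using is_onb_expansion[OF onb, of v] by simp
    then show False using unit by (simp add: cinner_def)
  qed
  then obtain k where k: "cmod (cinner (f k) v) = 1" using orthogonal_or_parallel by blast
  then have others: "cinner (f l) v = 0" if "l \<noteq> k" for l
    using is_onb_coefficient_norm_1_iff[OF onb unit] that by blast
  have "cnj (cinner (f k) v) * cinner (f k) v = 1"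
    using k complex_norm_square[of "cinner (f k) v"] by (simp add: mult.commute)
  then have "cnj (cinner (f k) v) *s (onb_matrix f *v v) = axis k 1"
    using others by (auto simp: vec_eq_iff axis_def onb_matrix_mult_vec)
  moreover have "cmod (cnj (cinner (f k) v)) = 1" using k by simp
  ultimately show ?thesis using that by blast
qed

lemma QLS_row: "QLS \<Psi> \<Longrightarrow> is_onb (\<Psi> i) UNIV"
  unfolding QLS_def by (simp add: eta_contract_eq)

lemma QLS_col: "QLS \<Psi> \<Longrightarrow> is_onb (\<lambda>i. \<Psi> i j) UNIV"
  unfolding QLS_def by blast

lemma QLS_norm: "QLS \<Psi> \<Longrightarrow> cinner (\<Psi> i j) (\<Psi> i j) = 1"
  unfolding QLS_def by blast

lemma QLS_row_orthogonal: "QLS \<Psi> \<Longrightarrow> j \<noteq> j' \<Longrightarrow> cinner (\<Psi> i j) (\<Psi> i j') = 0"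
  using is_onb_orthonormal[OF QLS_row[of \<Psi> i], of j j'] by simp

lemma QLS_col_orthogonal: "QLS \<Psi> \<Longrightarrow> i \<noteq> i' \<Longrightarrow> cinner (\<Psi> i j) (\<Psi> i' j) = 0"
  using is_onb_orthonormal[OF QLS_col[of \<Psi> j], of i i'] by simp

lemma QLS_orthogonal_or_parallel_to_axes:
  fixes \<Psi> :: "'n::finite qsquare"
  assumes Q: "QLS \<Psi>"
    and orthogonal_or_parallel: "\<And>i k r j. cinner (\<Psi> i k) (\<Psi> r j) = 0 \<or> cmod (cinner (\<Psi> i k) (\<Psi> r j)) = 1"
  shows "\<exists>U c. unitary U \<and> (\<forall>i j. cmod (c i j) = 1) \<and>
    (\<forall>i j. c i j *s (U *v \<Psi> i j) \<in> range (\<lambda>k. axis k 1))"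
proof -
  fix i0 :: 'n
  have "\<forall>i j. \<exists>c. cmod c = 1 \<and> c *s (onb_matrix (\<Psi> i0) *v \<Psi> i j) \<in> range (\<lambda>k. axis k 1)"
    by (metis onb_matrix_axis_phase[OF QLS_row[OF Q] QLS_norm[OF Q] orthogonal_or_parallel] rangeI)
  then obtain c where "\<forall>i j. cmod (c i j) = 1 \<and>
      c i j *s (onb_matrix (\<Psi> i0) *v \<Psi> i j) \<in> range (\<lambda>k. axis k 1)"
    by metis
  then show ?thesis using unitary_onb_matrix[OF QLS_row[OF Q]] by blast
qed

lemma isotopic_unitary_phase:
  assumes "unitary U" and "unitary V" and "\<forall>i j. cmod (c i j) = 1 \<and> cmod (d i j) = 1"
  shows "isotopic (\<Psi>, \<Phi>) (\<lambda>i j. c i j *s (U *v \<Psi> i j), \<lambda>i j. d i j *s (V *v \<Phi> i j))"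
proof -
  have "isotopy_step (\<Psi>, \<Phi>) (\<lambda>i j. U *v \<Psi> i j, \<Phi>)"
    by (rule isotopy_step.unitary_first[OF assms(1)])
  moreover have "isotopy_step (\<lambda>i j. U *v \<Psi> i j, \<Phi>) (\<lambda>i j. U *v \<Psi> i j, \<lambda>i j. V *v \<Phi> i j)"
    by (rule isotopy_step.unitary_second[OF assms(2)])
  moreover have "isotopy_step (\<lambda>i j. U *v \<Psi> i j, \<lambda>i j. V *v \<Phi> i j)
      (\<lambda>i j. c i j *s (U *v \<Psi> i j), \<lambda>i j. d i j *s (V *v \<Phi> i j))"
    using isotopy_step.phase[of c d] assms(3) by simp
  ultimately show ?thesis
    unfolding isotopic_def by (meson r_into_rtranclp rtranclp_trans)
qed

lemma orthogonal_QLS_overlap_product: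
  assumes "orthogonal_QLS \<Psi> \<Phi>" and "(i, j) \<noteq> (i', j')"
  shows "cinner (\<Psi> i j) (\<Psi> i' j') * cinner (\<Phi> i j) (\<Phi> i' j') = 0"
  using is_onb_orthonormal[OF assms(1)[unfolded orthogonal_QLS_def], of "(i, j)" "(i', j')"] assms(2)
  by (simp add: cinner_tensor)

lemma card_4_obtain_fourth:
  fixes a b c :: "'n::finite"
  assumes "CARD('n) = 4" and "a \<noteq> b" "a \<noteq> c" "b \<noteq> c"
  obtains m where "\<And>x. x \<noteq> m \<Longrightarrow> x \<in> {a, b, c}"
proof -
  have "card (UNIV - {a, b, c}) = 1"
    using assms by (simp add: card_Diff_subset)
  then obtain m where "UNIV - {a, b, c} = {m}" by (rule card_1_singletonE)
  then show ?thesis using that by blast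
qed

lemma QLS_order4_column_overlap_unique:
  fixes \<Psi> \<Phi> :: "'n::finite qsquare"
  assumes card: "CARD('n) = 4" and Q1: "QLS \<Psi>" and Q2: "QLS \<Phi>"
    and orth: "\<And>i j i' j'. (i, j) \<noteq> (i', j') \<Longrightarrow>
      cinner (\<Psi> i j) (\<Psi> i' j') * cinner (\<Phi> i j) (\<Phi> i' j') = 0"
    and rows: "r1 \<noteq> r2" "i \<noteq> r1" "i \<noteq> r2"
    and overlap: "cinner (\<Psi> i k) (\<Psi> r1 j) \<noteq> 0"
  shows "cinner (\<Psi> i k) (\<Psi> r2 j) = 0"
proof (rule ccontr)
  assume "cinner (\<Psi> i k) (\<Psi> r2 j) \<noteq> 0"
  define overlaps where "overlaps k' \<longleftrightarrow> (\<forall>r\<in>{r1, r2}. cinner (\<Psi> i k') (\<Psi> r j) \<noteq> 0)" for k'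
  have "overlaps k" using overlap \<open>cinner (\<Psi> i k) (\<Psi> r2 j) \<noteq> 0\<close> by (simp add: overlaps_def)
  have not_overlaps_j: "\<not> overlaps j"
    using QLS_col_orthogonal[OF Q1 rows(2)] by (simp add: overlaps_def)
  have "\<exists>k2. k2 \<noteq> k \<and> overlaps k2"
  proof (rule ccontr)
    assume "\<not> ?thesis"
    then have "cinner (\<Psi> r1 j) (\<Psi> r2 j) = cinner (\<Psi> r1 j) (\<Psi> i k) * cinner (\<Psi> i k) (\<Psi> r2 j)"
      by (intro is_onb_cinner_single[OF QLS_row[OF Q1]])
        (auto simp: overlaps_def cinner_swap[of "\<Psi> r1 j"])
    then show False
      using \<open>overlaps k\<close> QLS_col_orthogonal[OF Q1 rows(1)]
      by (simp add: overlaps_def cinner_swap[of "\<Psi> r1 j"])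
  qed
  then obtain k2 where "k2 \<noteq> k" "overlaps k2" by blast
  then obtain m where m: "\<And>x. x \<noteq> m \<Longrightarrow> x \<in> {k, k2, j}"
    using card_4_obtain_fourth[OF card] \<open>overlaps k\<close> not_overlaps_j by metis
  have \<Phi>_vanish: "cinner (\<Phi> i k') (\<Phi> r j) = 0" if r: "r \<in> {r1, r2}" and "k' \<noteq> m" for r k'
  proof -
    have "i \<noteq> r" using r rows by auto
    consider "k' = j" | "overlaps k'" using m[OF \<open>k' \<noteq> m\<close>] \<open>overlaps k\<close> \<open>overlaps k2\<close> by auto
    then show ?thesis
    proof cases
      case 1
      then show ?thesis using QLS_col_orthogonal[OF Q2 \<open>i \<noteq> r\<close>] by simp
    next
      case 2
      then show ?thesis using orth[of i k' r j] \<open>i \<noteq> r\<close> r by (auto simp: overlaps_def)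
    qed
  qed
  have \<Phi>_parallel: "cinner (\<Phi> i m) (\<Phi> r j) \<noteq> 0" if "r \<in> {r1, r2}" for r
    using is_onb_coefficient_norm_1_iff[OF QLS_row[OF Q2, of i] QLS_norm[OF Q2, of r j], of m]
      \<Phi>_vanish[OF that] by (metis norm_zero zero_neq_one)
  have "cinner (\<Phi> r1 j) (\<Phi> r2 j) = cinner (\<Phi> r1 j) (\<Phi> i m) * cinner (\<Phi> i m) (\<Phi> r2 j)"
    using \<Phi>_vanish by (intro is_onb_cinner_single[OF QLS_row[OF Q2]]) simp
  then show False
    using QLS_col_orthogonal[OF Q2 rows(1)] \<Phi>_parallel[of r1] \<Phi>_parallel[of r2]
    by (simp add: cinner_swap[of "\<Phi> r1 j"])
qed

lemma QLS_order4_orthogonal_or_parallel: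
  fixes \<Psi> \<Phi> :: "'n::finite qsquare"
  assumes card: "CARD('n) = 4" and Q1: "QLS \<Psi>" and Q2: "QLS \<Phi>"
    and orth: "\<And>i j i' j'. (i, j) \<noteq> (i', j') \<Longrightarrow>
      cinner (\<Psi> i j) (\<Psi> i' j') * cinner (\<Phi> i j) (\<Phi> i' j') = 0"
  shows "cinner (\<Psi> i k) (\<Psi> r j) = 0 \<or> cmod (cinner (\<Psi> i k) (\<Psi> r j)) = 1"
proof (cases "r = i")
  case True
  then show ?thesis using QLS_row_orthogonal[OF Q1] QLS_norm[OF Q1] by (cases "k = j") auto
next
  case r_ne_i: False
  show ?thesis
  proof (cases "cinner (\<Psi> i k) (\<Psi> r j) = 0")
    case overlap: False
    then have "j \<noteq> k" using QLS_col_orthogonal[OF Q1, of i r] r_ne_i by auto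
    have "cinner (\<Psi> r' j) (\<Psi> i k) = 0" if "r' \<noteq> r" for r'
    proof (cases "r' = i")
      case True
      then show ?thesis using QLS_row_orthogonal[OF Q1 \<open>j \<noteq> k\<close>] by simp
    next
      case r'_ne_i: False
      have "cinner (\<Psi> i k) (\<Psi> r' j) = 0"
        using QLS_order4_column_overlap_unique[OF card Q1 Q2 orth _ _ r'_ne_i[symmetric] overlap]
          that r_ne_i by auto
      then show ?thesis by (simp add: cinner_swap[of "\<Psi> r' j"])
    qed
    then have "cmod (cinner (\<Psi> r j) (\<Psi> i k)) = 1"
      using is_onb_coefficient_norm_1_iff[OF QLS_col[OF Q1] QLS_norm[OF Q1]] by blast
    then show ?thesis
      by (simp add: cinner_swap[of "\<Psi> r j"])
  qed simp
qed

theorem mainTheorem3: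
  fixes \<Psi> \<Phi> :: "'n::finite qsquare"
  assumes "CARD('n) = 4"
    and "QLS \<Psi>" and "QLS \<Phi>"
    and "orthogonal_QLS \<Psi> \<Phi>"
  shows "classical_pair \<Psi> \<Phi>"
proof -
  note orth = orthogonal_QLS_overlap_product[OF assms(4)]
  have orth': "cinner (\<Phi> i j) (\<Phi> i' j') * cinner (\<Psi> i j) (\<Psi> i' j') = 0"
    if "(i, j) \<noteq> (i', j')" for i j i' j'
    using orth[OF that] by (simp add: mult.commute)
  obtain U c where U: "unitary U" "\<forall>i j. cmod (c i j) = 1"
      "\<forall>i j. c i j *s (U *v \<Psi> i j) \<in> range (\<lambda>k. axis k 1)"
    using QLS_orthogonal_or_parallel_to_axes[OF assms(2)
        QLS_order4_orthogonal_or_parallel[OF assms(1-3) orth]] by blast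
  obtain V d where V: "unitary V" "\<forall>i j. cmod (d i j) = 1"
      "\<forall>i j. d i j *s (V *v \<Phi> i j) \<in> range (\<lambda>k. axis k 1)"
    using QLS_orthogonal_or_parallel_to_axes[OF assms(3)
        QLS_order4_orthogonal_or_parallel[OF assms(1) assms(3,2) orth']] by blast
  show ?thesis
    unfolding classical_pair_def using isotopic_unitary_phase[OF U(1) V(1)] U(2,3) V(2,3) by blast
qed

end
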